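(* Let $R$ be a commutative ring which is free as an abelian group, $n\ge2$, $p$ a prime, and write $\Gamma_m=\Gamma(SL_n(R),p^m)$. Let $r,s,l\ge1$ with $l\le s$. Then the group extension $$1\to\Gamma_{r+s-l}/\Gamma_{r+s}\to\Gamma_r/\Gamma_{r+s}\to\Gamma_r/\Gamma_{r+s-l}\to1$$ is central if and only if $r\ge l$.
   Context: $\Gamma(SL_n(R),p^m)=\ker\big(SL_n(R)\to SL_n(R\otimes_{\mathbb{Z}}\mathbb{Z}/p^m)\big)$. An extension $1\to N\to G\to Q\to1$ is central if $N$ lies in the center of $G$. *)

theory Defs
  imports "HOL-Analysis.Analysis"
begin

definition free_abelian_ring :: "'a::comm_ring_1 itself \<Rightarrow> bool" where
  "free_abelian_ring _ \<longleftrightarrow> (\<exists>B::'a set. \<forall>x::'a. \<exists>!c::'a \<Rightarrow> int.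
       {b. c b \<noteq> 0} \<subseteq> B \<and> finite {b. c b \<noteq> 0} \<and>
       x = (\<Sum>b\<in>{b. c b \<noteq> 0}. of_int (c b) * b))"

text \<open>Principal congruence subgroup Gamma(SL_n(R), q): kernel of SL_n(R) -> SL_n(R/qR)
  (note R \<otimes> Z/q = R/qR): determinant one and congruent to the identity mod q entrywise.\<close>
definition cong_subgroup :: "nat \<Rightarrow> ('a::comm_ring_1^'n::finite^'n) set" where
  "cong_subgroup q = {A. det A = 1 \<and>
      (\<forall>i j. \<exists>c. A $ i $ j - mat 1 $ i $ j = of_nat q * c)}"

definition lcoset :: "('a::semiring_1^'n::finite^'n) \<Rightarrow> ('a^'n^'n) set \<Rightarrow> ('a^'n^'n) set" where
  "lcoset x K = (\<lambda>k. x ** k) ` K"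

text \<open>For normal subgroups K \<subseteq> N \<subseteq> G, the extension 1 -> N/K -> G/K -> G/N -> 1 is central
  iff every element of N/K commutes in G/K with every element of G/K,
  i.e. (xK)(yK) = (xy)K equals (yx)K.\<close>
definition central_ext :: "('a::semiring_1^'n::finite^'n) set \<Rightarrow> ('a^'n^'n) set \<Rightarrow> ('a^'n^'n) set \<Rightarrow> bool" where
  "central_ext G N K \<longleftrightarrow> (\<forall>x\<in>N. \<forall>y\<in>G. lcoset (x ** y) K = lcoset (y ** x) K)"

end

theory Submission imports Defs begin

text \<open>Since \<open>\<Gamma>(q)\<close> consists of the determinant-one matrices \<open>1 + qX\<close>, the commutator
  \<open>xy - yx = (x - 1)(y - 1) - (y - 1)(x - 1)\<close> of \<open>x \<in> \<Gamma>(p^(r+s-l))\<close> and \<open>y \<in> \<Gamma>(p^r)\<close>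
  is divisible by \<open>p^(2r+s-l)\<close>, and \<open>xy\<Gamma>(p^(r+s)) = yx\<Gamma>(p^(r+s))\<close> means exactly that
  \<open>p^(r+s)\<close> divides \<open>xy - yx\<close>. So the extension is central when \<open>r \<ge> l\<close>. Conversely, for the
  transvections \<open>x = 1 + p^(r+s-l)e\<^sub>i\<^sub>j\<close> and \<open>y = 1 + p^r e\<^sub>j\<^sub>i\<close> the \<open>(i,i)\<close> entry of
  \<open>xy - yx\<close> is \<open>p^(2r+s-l)\<close>. As \<open>R\<close> is free abelian, it is torsion-free and no integer other
  than \<open>\<plusminus>1\<close> is a unit of \<open>R\<close>, so integers divide each other in \<open>R\<close> only if they do in \<open>\<int>\<close>;
  hence \<open>p^(r+s)\<close> divides \<open>p^(2r+s-l)\<close> in \<open>R\<close> only when \<open>r \<ge> l\<close>.\<close>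

definition int_expansion :: "'a::comm_ring_1 set \<Rightarrow> 'a \<Rightarrow> ('a \<Rightarrow> int) \<Rightarrow> bool" where
  "int_expansion B x c \<longleftrightarrow> {b. c b \<noteq> 0} \<subseteq> B \<and> finite {b. c b \<noteq> 0} \<and>
     x = (\<Sum>b\<in>{b. c b \<noteq> 0}. of_int (c b) * b)"

lemma free_abelian_ringE:
  assumes "free_abelian_ring TYPE('a::comm_ring_1)"
  obtains B :: "'a::comm_ring_1 set" where "\<And>x. \<exists>!c. int_expansion B x c"
  using assms unfolding free_abelian_ring_def int_expansion_def by blast

lemma int_expansion_scale:
  assumes "int_expansion B x c" "N \<noteq> 0"
  shows "int_expansion B (of_int N * x) (\<lambda>b. N * c b)"
proof -
  have "{b. N * c b \<noteq> 0} = {b. c b \<noteq> 0}" using assms(2) by auto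
  then show ?thesis using assms(1) unfolding int_expansion_def
    by (simp add: sum_distrib_left mult.assoc)
qed

lemma free_abelian_ring_torsion_free:
  assumes "free_abelian_ring TYPE('a::comm_ring_1)" "N \<noteq> 0" "of_int N * (x::'a) = 0"
  shows "x = 0"
proof -
  obtain B :: "'a set" where unique: "\<And>x. \<exists>!c. int_expansion B x c"
    using free_abelian_ringE[OF assms(1)] by blast
  obtain c where c: "int_expansion B x c" using unique by blast
  have "int_expansion B 0 (\<lambda>b. N * c b)" using int_expansion_scale[OF c assms(2)] assms(3) by simp
  moreover have "int_expansion B 0 (\<lambda>_. 0)" by (simp add: int_expansion_def)
  ultimately have "(\<lambda>b. N * c b) = (\<lambda>_. 0)" using unique by blast
  then have "\<forall>b. c b = 0" using assms(2) by (metis mult_eq_0_iff)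
  then show ?thesis using c by (simp add: int_expansion_def)
qed

lemma free_abelian_ring_of_int_dvd_one:
  assumes "free_abelian_ring TYPE('a::comm_ring_1)" "(of_int N :: 'a) dvd 1"
  shows "\<bar>N\<bar> = 1"
proof -
  obtain B :: "'a set" where unique: "\<And>x. \<exists>!c. int_expansion B x c"
    using free_abelian_ringE[OF assms(1)] by blast
  obtain z :: 'a where z: "1 = of_int N * z" using assms(2) by (elim dvdE)
  \<comment> \<open>Then \<open>b = N (z b)\<close> for every \<open>b\<close>, so all coordinates are divisible by \<open>N\<close>;
    test this on a basis element \<open>b0\<close> (one occurs in the expansion of \<open>1 \<noteq> 0\<close>).\<close>
  obtain c1 where c1: "int_expansion B 1 c1" using unique by blast
  have "{b. c1 b \<noteq> 0} \<noteq> {}"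
  proof
    assume "{b. c1 b \<noteq> 0} = {}"
    then show False using c1 by (simp add: int_expansion_def)
  qed
  then obtain b0 where "c1 b0 \<noteq> 0" by blast
  then have "b0 \<in> B" using c1 by (auto simp: int_expansion_def)
  define e where "e = (\<lambda>b. if b = b0 then (1::int) else 0)"
  have "{b. e b \<noteq> 0} = {b0}" by (auto simp: e_def)
  then have e: "int_expansion B b0 e" using \<open>b0 \<in> B\<close> by (simp add: int_expansion_def e_def)
  obtain c where c: "int_expansion B (z * b0) c" using unique by blast
  have "N \<noteq> 0" using z by auto
  have "b0 = of_int N * (z * b0)" using z by (metis mult.assoc mult_1)
  then have "int_expansion B b0 (\<lambda>b. N * c b)" using int_expansion_scale[OF c \<open>N \<noteq> 0\<close>] by simp
  then have "e = (\<lambda>b. N * c b)" using unique e by blast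
  then have "1 = N * c b0" unfolding e_def by metis
  then show ?thesis using zmult_eq_1_iff by auto
qed

lemma free_abelian_ring_of_nat_dvd_iff:
  assumes "free_abelian_ring TYPE('a::comm_ring_1)"
  shows "(of_nat m :: 'a) dvd of_nat n \<longleftrightarrow> m dvd n"
proof
  assume "m dvd n"
  then show "(of_nat m :: 'a) dvd of_nat n" by (elim dvdE) simp
next
  assume "(of_nat m :: 'a) dvd of_nat n"
  then obtain z :: 'a where z: "of_nat n = of_nat m * z" by (elim dvdE)
  show "m dvd n"
  proof (cases "m = 0")
    case True
    then have "of_int (int n) * (1::'a) = 0" using z by simp
    then have "int n = 0" using free_abelian_ring_torsion_free[OF assms, of "int n" 1] by auto
    then show ?thesis by simp
  next
    case False
    obtain g m' n' where mn: "m = m' * g" "n = n' * g" and "g \<noteq> 0" "coprime m' n'"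
      using gcd_coprime_exists[of m n] False by auto
    have "of_int (int g) * (of_nat n' - of_nat m' * z) = (0::'a)"
      using z by (simp add: mn algebra_simps)
    then have "(of_nat n' :: 'a) - of_nat m' * z = 0"
      using free_abelian_ring_torsion_free[OF assms] \<open>g \<noteq> 0\<close> by (metis of_nat_eq_0_iff)
    then have n': "of_nat n' = of_nat m' * z" by simp
    obtain u v :: int where "u * int m' + v * int n' = 1"
      using bezout_int[of "int m'" "int n'"] \<open>coprime m' n'\<close> by (auto simp: coprime_iff_gcd_eq_1)
    then have "(1::'a) = of_int (u * int m' + v * int n')" by simp
    also have "\<dots> = of_int (int m') * (of_int u + of_int v * z)"
      by (simp add: n' algebra_simps)
    finally have "\<bar>int m'\<bar> = 1" by (intro free_abelian_ring_of_int_dvd_one[OF assms] dvdI)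
    then show ?thesis using mn by simp
  qed
qed

definition adjugate :: "'a::comm_ring_1^'n::finite^'n \<Rightarrow> 'a^'n^'n" where
  "adjugate A = (\<chi> k j. det (\<chi> i. if i = j then axis k 1 else A $ i))"

lemma matrix_mul_adjugate: "A ** adjugate A = mat (det (A::'a::comm_ring_1^'n::finite^'n))"
proof -
  have "(A ** adjugate A) $ i $ j = (if i = j then det A else 0)" for i j
  proof -
    have "(A ** adjugate A) $ i $ j
        = (\<Sum>k\<in>UNIV. A$i$k * det (\<chi> i'. if i' = j then axis k 1 else A $ i'))"
      by (simp add: matrix_matrix_mult_def adjugate_def)
    also have "\<dots> = (\<Sum>k\<in>UNIV. det (\<chi> i'. if i' = j then A$i$k *s axis k 1 else A $ i'))"
      by (simp add: det_row_mul)
    also have "\<dots> = det (\<chi> i'. if i' = j then (\<Sum>k\<in>UNIV. A$i$k *s axis k 1) else A $ i')"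
      by (simp add: det_linear_row_sum)
    also have "\<dots> = det (\<chi> i'. if i' = j then A $ i else A $ i')"
      by (simp only: basis_expansion)
    also have "\<dots> = (if i = j then det A else 0)"
    proof (cases "i = j")
      case True
      then have "(\<chi> i'. if i' = j then A $ i else A $ i') = A" by (simp add: vec_eq_iff)
      then show ?thesis using True by simp
    next
      case False
      then have "det (\<chi> i'. if i' = j then A $ i else A $ i') = 0"
        by (intro det_identical_rows[OF False]) (simp add: row_def vec_eq_iff)
      then show ?thesis using False by simp
    qed
    finally show ?thesis .
  qed
  then show ?thesis by (simp add: vec_eq_iff mat_def)
qed

lemma adjugate_det_one:
  fixes A :: "'a::comm_ring_1^'n::finite^'n"
  assumes "det A = 1"
  shows "A ** adjugate A = mat 1" "adjugate A ** A = mat 1" "det (adjugate A) = 1"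
proof -
  show right: "A ** adjugate A = mat 1" using matrix_mul_adjugate[of A] assms by simp
  then have "det A * det (adjugate A) = 1" by (metis det_I det_mul)
  then show det: "det (adjugate A) = 1" using assms by simp
  have "adjugate A ** adjugate (adjugate A) = mat 1"
    using matrix_mul_adjugate[of "adjugate A"] det by simp
  moreover have "A = adjugate (adjugate A)"
    by (metis calculation matrix_mul_assoc matrix_mul_lid matrix_mul_rid right)
  ultimately show "adjugate A ** A = mat 1" by simp
qed

lemma matrix_diff_ldistrib: "(A::'a::comm_ring_1^'n::finite^'m) ** (B - C) = A ** B - A ** C"
  by (simp add: vec_eq_iff matrix_matrix_mult_def algebra_simps sum_subtractf)

lemma matrix_diff_rdistrib: "((A::'a::comm_ring_1^'n::finite^'m) - B) ** C = A ** C - B ** C"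
  by (simp add: vec_eq_iff matrix_matrix_mult_def algebra_simps sum_subtractf)

lemma matrix_commutator_eq:
  fixes x y :: "'a::comm_ring_1^'n::finite^'n"
  shows "x ** y - y ** x = (x - mat 1) ** (y - mat 1) - (y - mat 1) ** (x - mat 1)"
  by (simp add: matrix_diff_ldistrib matrix_diff_rdistrib algebra_simps)

definition mat_dvd :: "nat \<Rightarrow> 'a::comm_ring_1^'n^'m \<Rightarrow> bool" where
  "mat_dvd q M \<longleftrightarrow> (\<forall>i j. (of_nat q :: 'a) dvd M $ i $ j)"

lemma mat_dvd_add: "mat_dvd q A \<Longrightarrow> mat_dvd q B \<Longrightarrow> mat_dvd q (A + B)"
  by (simp add: mat_dvd_def)

lemma mat_dvd_diff: "mat_dvd q A \<Longrightarrow> mat_dvd q B \<Longrightarrow> mat_dvd q (A - B)"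
  by (simp add: mat_dvd_def)

lemma mat_dvd_uminus: "mat_dvd q A \<Longrightarrow> mat_dvd q (- A)"
  by (simp add: mat_dvd_def)

lemma mat_dvd_dvd: "q' dvd q \<Longrightarrow> mat_dvd q A \<Longrightarrow> mat_dvd q' A"
  unfolding mat_dvd_def by (metis dvd_def dvd_trans of_nat_mult)

lemma mat_dvd_mult:
  fixes U :: "'a::comm_ring_1^'n::finite^'m" and V :: "'a^'p^'n"
  assumes "mat_dvd q U" "mat_dvd q' V"
  shows "mat_dvd (q * q') (U ** V)"
  using assms unfolding mat_dvd_def matrix_matrix_mult_def
  by (auto intro!: dvd_sum simp: mult_dvd_mono)

lemma mat_dvd_mult_left: "mat_dvd q V \<Longrightarrow> mat_dvd q ((U::'a::comm_ring_1^'n::finite^'m) ** V)"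
  using mat_dvd_mult[of 1 U q V] by (simp add: mat_dvd_def)

lemma cong_subgroup_iff: "A \<in> cong_subgroup q \<longleftrightarrow> det A = 1 \<and> mat_dvd q (A - mat 1)"
  by (simp add: cong_subgroup_def mat_dvd_def dvd_def)

lemma mat_1_in_cong_subgroup: "mat 1 \<in> cong_subgroup q"
  by (simp add: cong_subgroup_iff mat_dvd_def)

lemma cong_subgroup_mult:
  fixes A B :: "'a::comm_ring_1^'n::finite^'n"
  assumes "A \<in> cong_subgroup q" "B \<in> cong_subgroup q"
  shows "A ** B \<in> cong_subgroup q"
proof -
  have expand: "A ** B - mat 1 = (A - mat 1) ** (B - mat 1) + (A - mat 1) + (B - mat 1)"
    by (simp add: matrix_diff_ldistrib matrix_diff_rdistrib algebra_simps)
  show ?thesis using assms unfolding cong_subgroup_iff expand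
    by (simp only: det_mul mult_1 mat_dvd_add mat_dvd_mult_left)
qed

lemma adjugate_in_cong_subgroup:
  fixes A :: "'a::comm_ring_1^'n::finite^'n"
  assumes "A \<in> cong_subgroup q"
  shows "adjugate A \<in> cong_subgroup q"
proof -
  have det: "det A = 1" using assms cong_subgroup_iff by blast
  then have "adjugate A - mat 1 = - (adjugate A ** (A - mat 1))"
    by (simp add: matrix_diff_ldistrib adjugate_det_one(2))
  then show ?thesis using assms adjugate_det_one(3)[OF det] unfolding cong_subgroup_iff
    by (simp add: mat_dvd_uminus mat_dvd_mult_left)
qed

lemma lcoset_mult_cong_subgroup:
  fixes M :: "'a::comm_ring_1^'n::finite^'n"
  assumes "k \<in> cong_subgroup q"
  shows "lcoset (M ** k) (cong_subgroup q) = lcoset M (cong_subgroup q)"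
proof (intro equalityI subsetI)
  fix z assume "z \<in> lcoset (M ** k) (cong_subgroup q)"
  then obtain k' where "k' \<in> cong_subgroup q" "z = M ** (k ** k')"
    by (auto simp: lcoset_def matrix_mul_assoc)
  then show "z \<in> lcoset M (cong_subgroup q)"
    using cong_subgroup_mult[OF assms] by (auto simp: lcoset_def)
next
  fix z assume "z \<in> lcoset M (cong_subgroup q)"
  then obtain k' where k': "k' \<in> cong_subgroup q" "z = M ** k'" by (auto simp: lcoset_def)
  have "det k = 1" using assms cong_subgroup_iff by blast
  then have "z = M ** k ** (adjugate k ** k')"
    using k'(2) adjugate_det_one(1) by (metis matrix_mul_assoc matrix_mul_lid)
  moreover have "adjugate k ** k' \<in> cong_subgroup q"
    using cong_subgroup_mult[OF adjugate_in_cong_subgroup[OF assms] k'(1)] .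
  ultimately show "z \<in> lcoset (M ** k) (cong_subgroup q)" by (auto simp: lcoset_def)
qed

lemma lcoset_cong_subgroup_eq_iff:
  fixes A B :: "'a::comm_ring_1^'n::finite^'n"
  assumes "det A = 1" "det B = 1"
  shows "lcoset A (cong_subgroup q) = lcoset B (cong_subgroup q) \<longleftrightarrow> mat_dvd q (A - B)"
proof
  assume "lcoset A (cong_subgroup q) = lcoset B (cong_subgroup q)"
  moreover have "A \<in> lcoset A (cong_subgroup q)"
    using mat_1_in_cong_subgroup by (force simp: lcoset_def)
  ultimately obtain k where k: "k \<in> cong_subgroup q" "A = B ** k" by (auto simp: lcoset_def)
  then have "A - B = B ** (k - mat 1)" by (simp add: matrix_diff_ldistrib)
  then show "mat_dvd q (A - B)" using k(1) by (simp add: cong_subgroup_iff mat_dvd_mult_left)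
next
  assume dvd: "mat_dvd q (A - B)"
  define k where "k = adjugate B ** A"
  have "k - mat 1 = adjugate B ** (A - B)"
    by (simp add: k_def matrix_diff_ldistrib adjugate_det_one(2)[OF assms(2)])
  moreover have "det k = 1" using assms adjugate_det_one(3)[OF assms(2)] by (simp add: k_def det_mul)
  ultimately have "k \<in> cong_subgroup q" using dvd by (simp add: cong_subgroup_iff mat_dvd_mult_left)
  moreover have "A = B ** k"
    by (simp add: k_def matrix_mul_assoc adjugate_det_one(1)[OF assms(2)])
  ultimately show "lcoset A (cong_subgroup q) = lcoset B (cong_subgroup q)"
    by (simp add: lcoset_mult_cong_subgroup)
qed

lemma central_ext_cong_subgroup_iff:
  "central_ext (cong_subgroup q :: ('a::comm_ring_1^'n::finite^'n) set) (cong_subgroup q')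
     (cong_subgroup Q) \<longleftrightarrow>
   (\<forall>x\<in>cong_subgroup q'. \<forall>y\<in>cong_subgroup q. mat_dvd Q (x ** y - y ** x :: 'a^'n^'n))"
proof -
  have det: "det (x ** y) = 1"
    if "x \<in> cong_subgroup q1" "y \<in> cong_subgroup q2" for x y :: "'a^'n^'n" and q1 q2
    using that by (simp add: cong_subgroup_iff det_mul)
  have iff: "lcoset (x ** y) (cong_subgroup Q) = lcoset (y ** x) (cong_subgroup Q) \<longleftrightarrow>
      mat_dvd Q (x ** y - y ** x)"
    if "x \<in> cong_subgroup q'" "y \<in> cong_subgroup q" for x y :: "'a^'n^'n"
    using det[OF that] det[OF that(2,1)] by (rule lcoset_cong_subgroup_eq_iff)
  show ?thesis unfolding central_ext_def by (simp add: iff)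
qed

lemma commutator_cong_subgroup_mat_dvd:
  fixes x y :: "'a::comm_ring_1^'n::finite^'n"
  assumes "x \<in> cong_subgroup q'" "y \<in> cong_subgroup q"
  shows "mat_dvd (q' * q) (x ** y - y ** x)"
proof -
  have x: "mat_dvd q' (x - mat 1)" and y: "mat_dvd q (y - mat 1)"
    using assms cong_subgroup_iff by blast+
  have "mat_dvd (q' * q) ((x - mat 1) ** (y - mat 1))" using x y by (rule mat_dvd_mult)
  moreover have "mat_dvd (q' * q) ((y - mat 1) ** (x - mat 1))"
    using mat_dvd_mult[OF y x] by (simp only: mult.commute)
  ultimately show ?thesis by (subst matrix_commutator_eq) (rule mat_dvd_diff)
qed

lemma central_ext_cong_subgroupI:
  assumes "Q dvd q' * q"
  shows "central_ext (cong_subgroup q :: ('a::comm_ring_1^'n::finite^'n) set) (cong_subgroup q')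
           (cong_subgroup Q)"
  unfolding central_ext_cong_subgroup_iff
  by (intro ballI mat_dvd_dvd[OF assms] commutator_cong_subgroup_mat_dvd)

definition transvection :: "'n::finite \<Rightarrow> 'n \<Rightarrow> 'a::comm_ring_1 \<Rightarrow> 'a^'n^'n" where
  "transvection i j c =
     (\<chi> k. if k = i then row i (mat 1) + c *s row j (mat 1) else row k (mat 1))"

lemma det_transvection: "i \<noteq> j \<Longrightarrow> det (transvection i j c) = 1"
  unfolding transvection_def using det_row_operation[of i j "mat 1" c] by simp

lemma transvection_minus_mat_1:
  "i \<noteq> j \<Longrightarrow> transvection i j c $ a $ b - mat 1 $ a $ b = (if a = i \<and> b = j then c else 0)"
  by (auto simp: transvection_def row_def mat_def)

lemma transvection_in_cong_subgroup:
  assumes "i \<noteq> j" "(of_nat q :: 'a::comm_ring_1) dvd c"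
  shows "(transvection i j c :: 'a^'n::finite^'n) \<in> cong_subgroup q"
  using assms by (simp add: cong_subgroup_iff det_transvection mat_dvd_def transvection_minus_mat_1)

lemma transvection_commutator_diag:
  assumes "i \<noteq> j"
  shows "(transvection i j a ** transvection j i b - transvection j i b ** transvection i j a) $ i $ i
           = a * b"
proof -
  have "((transvection i j a - mat 1) ** (transvection j i b - mat 1)) $ i $ i = a * b"
    using assms by (simp add: matrix_matrix_mult_def transvection_minus_mat_1 if_distrib cong: if_cong)
  moreover have "((transvection j i b - mat 1) ** (transvection i j a - mat 1)) $ i $ i = 0"
    using assms by (simp add: matrix_matrix_mult_def transvection_minus_mat_1)
  ultimately show ?thesis by (subst matrix_commutator_eq) simp
qed

lemma central_ext_cong_subgroupD:
  assumes "CARD('n::finite) \<ge> 2"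
    and "central_ext (cong_subgroup q :: ('a::comm_ring_1^'n^'n) set) (cong_subgroup q')
           (cong_subgroup Q)"
  shows "(of_nat Q :: 'a) dvd of_nat (q' * q)"
proof -
  obtain i j :: 'n where "i \<noteq> j"
    using assms(1) card_le_Suc0_iff_eq[of "UNIV :: 'n set"] by auto
  let ?x = "transvection i j (of_nat q') :: 'a^'n^'n" and ?y = "transvection j i (of_nat q)"
  have "?x \<in> cong_subgroup q'" "?y \<in> cong_subgroup q"
    using \<open>i \<noteq> j\<close> by (auto intro: transvection_in_cong_subgroup)
  then have "mat_dvd Q (?x ** ?y - ?y ** ?x)"
    using assms(2) unfolding central_ext_cong_subgroup_iff by blast
  then have "(of_nat Q :: 'a) dvd (?x ** ?y - ?y ** ?x) $ i $ i" by (simp only: mat_dvd_def)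
  also have "(?x ** ?y - ?y ** ?x) $ i $ i = of_nat (q' * q)"
    by (simp only: transvection_commutator_diag[OF \<open>i \<noteq> j\<close>] of_nat_mult)
  finally show ?thesis .
qed

theorem lemma7p1:
  fixes p r s l :: nat
  assumes "free_abelian_ring TYPE('a::comm_ring_1)"
    and "CARD('n::finite) \<ge> 2"
    and "prime p"
    and "r \<ge> 1" and "s \<ge> 1" and "l \<ge> 1" and "l \<le> s"
  shows "central_ext (cong_subgroup (p ^ r) :: ('a^'n^'n) set)
            (cong_subgroup (p ^ (r + s - l)))
            (cong_subgroup (p ^ (r + s)))
         \<longleftrightarrow> r \<ge> l"
proof
  assume "central_ext (cong_subgroup (p ^ r) :: ('a^'n^'n) set)
    (cong_subgroup (p ^ (r + s - l))) (cong_subgroup (p ^ (r + s)))"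
  then have "(of_nat (p ^ (r + s)) :: 'a) dvd of_nat (p ^ (r + s - l) * p ^ r)"
    by (rule central_ext_cong_subgroupD[OF assms(2)])
  then have "p ^ (r + s) dvd p ^ (r + s - l + r)"
    unfolding free_abelian_ring_of_nat_dvd_iff[OF assms(1)] by (simp add: power_add)
  then have "r + s \<le> r + s - l + r"
    using prime_gt_1_nat[OF \<open>prime p\<close>] by (rule power_dvd_imp_le)
  then show "r \<ge> l" using \<open>l \<le> s\<close> by simp
next
  assume "r \<ge> l"
  then have "p ^ (r + s) dvd p ^ (r + s - l) * p ^ r"
    using \<open>l \<le> s\<close> by (simp add: le_imp_power_dvd flip: power_add)
  then show "central_ext (cong_subgroup (p ^ r) :: ('a^'n^'n) set)
    (cong_subgroup (p ^ (r + s - l))) (cong_subgroup (p ^ (r + s)))"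
    by (rule central_ext_cong_subgroupI)
qed

end
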